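(* Let $s\ge1$ and let $G=\mathbb{Z}_2*\cdots*\mathbb{Z}_2$ be the free product of $s$ copies of $\mathbb{Z}_2$, with generators $g_1,\dots,g_s$ ($g_i^2=e$). Let $\lambda$ be the left regular representation of $G$ on $\ell_2(G)$, $\lambda(g)|g'\rangle=|gg'\rangle$. For each $i$ let $P_i^{\pm}=(\mathbb{1}\pm\lambda(g_i))/2$ (projectors) and define the channel $$\Omega(\sigma)=\frac1s\sum_{i=1}^s\big(P_i^+\sigma P_i^++P_i^-\sigma P_i^-\big).$$ Then the associated superoperator $\overline{\Omega}=\frac12\big(\frac1s\sum_{i=1}^s\lambda(g_i)\otimes\lambda(g_i)^*+\mathbb{1}\big)$ on $\ell_2(G)\otimes\ell_2(G)$ satisfies $\|\overline{\Omega}\|\le\frac12+\frac1{\sqrt s}$. In particular, if $s\ge5$, then $\mu:=\|\overline{\Omega}\|<1$ and for every density operator $\sigma$ on $\ell_2(G)$ and every $N\in\mathbb{N}$, $\mathrm{tr}\{[\Omega^N(\sigma)]^2\}\le\mu^{2N}\,\mathrm{tr}\{\sigma^2\}\le\mu^{2N}$.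
   Context: Fixing the orthonormal basis $\{|g\rangle:g\in G\}$ of $\ell_2(G)$, a Hilbert–Schmidt operator $\sigma=\sum_{g,h}\sigma_{gh}|g\rangle\langle h|$ is identified with $|\sigma\rangle=\sum\sigma_{gh}|g\rangle|h\rangle\in\ell_2(G)\otimes\ell_2(G)$, and $\overline{\Omega}$ is the operator with $\overline{\Omega}|\sigma\rangle=|\Omega(\sigma)\rangle$; $A^*$ denotes entrywise complex conjugate in this basis. $\|\cdot\|$ is the operator norm. *)

theory Defs
  imports "HOL-Analysis.Analysis"
begin

text \<open>Elements of G are reduced words over the letters 0..s-1 (letter i stands for g_(i+1)),
  i.e. lists with no two adjacent equal letters; the empty word is e.\<close>

definition FP :: "nat \<Rightarrow> nat list set" where
  "FP s = {w. set w \<subseteq> {..<s} \<and> successively (\<noteq>) w}"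

definition gen_mult :: "nat \<Rightarrow> nat list \<Rightarrow> nat list" where
  "gen_mult i w = (if w \<noteq> [] \<and> hd w = i then tl w else i # w)"

text \<open>Matrix of lambda(g_i) in the basis |g>: entry (x,u) = <x|lambda(g_i)|u>.\<close>
definition lam_ker :: "nat \<Rightarrow> nat list \<Rightarrow> nat list \<Rightarrow> complex" where
  "lam_ker i x u = (if x = gen_mult i u then 1 else 0)"

definition id_ker :: "'a \<Rightarrow> 'a \<Rightarrow> complex" where
  "id_ker x u = (if x = u then 1 else 0)"

definition conj_ker :: "('a \<Rightarrow> 'b \<Rightarrow> complex) \<Rightarrow> 'a \<Rightarrow> 'b \<Rightarrow> complex" where
  "conj_ker A x u = cnj (A x u)"

definition tensor_ker ::
  "('a \<Rightarrow> 'a \<Rightarrow> complex) \<Rightarrow> ('b \<Rightarrow> 'b \<Rightarrow> complex) \<Rightarrow> ('a \<times> 'b) \<Rightarrow> ('a \<times> 'b) \<Rightarrow> complex" where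
  "tensor_ker A B p q = A (fst p) (fst q) * B (snd p) (snd q)"

definition kapply :: "'a set \<Rightarrow> ('a \<Rightarrow> 'a \<Rightarrow> complex) \<Rightarrow> ('a \<Rightarrow> complex) \<Rightarrow> 'a \<Rightarrow> complex" where
  "kapply S K F p = (\<Sum>\<^sub>\<infinity>q\<in>S. K p q * F q)"

definition kmult :: "'a set \<Rightarrow> ('a \<Rightarrow> 'a \<Rightarrow> complex) \<Rightarrow> ('a \<Rightarrow> 'a \<Rightarrow> complex) \<Rightarrow> 'a \<Rightarrow> 'a \<Rightarrow> complex" where
  "kmult S A B x y = (\<Sum>\<^sub>\<infinity>u\<in>S. A x u * B u y)"

definition l2 :: "'a set \<Rightarrow> ('a \<Rightarrow> complex) set" where
  "l2 S = {F. (\<forall>q. q \<notin> S \<longrightarrow> F q = 0) \<and> (\<lambda>q. (norm (F q))\<^sup>2) summable_on S}"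

definition l2norm :: "'a set \<Rightarrow> ('a \<Rightarrow> complex) \<Rightarrow> real" where
  "l2norm S F = sqrt (\<Sum>\<^sub>\<infinity>q\<in>S. (norm (F q))\<^sup>2)"

definition opnorm :: "'a set \<Rightarrow> (('a \<Rightarrow> complex) \<Rightarrow> ('a \<Rightarrow> complex)) \<Rightarrow> real" where
  "opnorm S T = Sup {l2norm S (T F) | F. F \<in> l2 S \<and> l2norm S F \<le> 1}"

text \<open>P_i^+ (sg = 1) and P_i^- (sg = -1): (1 +- lambda(g_i))/2.\<close>
definition P_ker :: "nat \<Rightarrow> complex \<Rightarrow> nat list \<Rightarrow> nat list \<Rightarrow> complex" where
  "P_ker i sg x u = (id_ker x u + sg * lam_ker i x u) / 2"

definition Omega :: "nat \<Rightarrow> (nat list \<Rightarrow> nat list \<Rightarrow> complex) \<Rightarrow> nat list \<Rightarrow> nat list \<Rightarrow> complex" where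
  "Omega s \<sigma> = (\<lambda>x y. (1 / of_nat s) * (\<Sum>i<s.
      kmult (FP s) (kmult (FP s) (P_ker i 1) \<sigma>) (P_ker i 1) x y
    + kmult (FP s) (kmult (FP s) (P_ker i (-1)) \<sigma>) (P_ker i (-1)) x y))"

text \<open>Omega_bar = 1/2 (1/s sum_i lambda(g_i) (x) lambda(g_i)^* + 1) on l2(G) (x) l2(G) = l2(G x G).\<close>
definition Omega_bar ::
  "nat \<Rightarrow> (nat list \<times> nat list \<Rightarrow> complex) \<Rightarrow> (nat list \<times> nat list \<Rightarrow> complex)" where
  "Omega_bar s F = (\<lambda>p. (1/2) * ((1 / of_nat s) *
      (\<Sum>i<s. kapply (FP s \<times> FP s) (tensor_ker (lam_ker i) (conj_ker (lam_ker i))) F p) + F p))"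

definition mu :: "nat \<Rightarrow> real" where
  "mu s = opnorm (FP s \<times> FP s) (Omega_bar s)"

text \<open>A density operator on l2(S), given by its matrix: supported on S x S, Hermitian,
  positive semidefinite (on finitely supported vectors, which is dense), trace-class
  with trace 1 (summable diagonal summing to 1).\<close>
definition density_op :: "'a set \<Rightarrow> ('a \<Rightarrow> 'a \<Rightarrow> complex) \<Rightarrow> bool" where
  "density_op S \<sigma> \<longleftrightarrow>
     (\<forall>x y. x \<notin> S \<or> y \<notin> S \<longrightarrow> \<sigma> x y = 0) \<and>
     (\<forall>x y. \<sigma> y x = cnj (\<sigma> x y)) \<and>
     (\<forall>A f. finite A \<longrightarrow> A \<subseteq> S \<longrightarrow>
        0 \<le> Re (\<Sum>x\<in>A. \<Sum>y\<in>A. cnj (f x) * \<sigma> x y * f y)) \<and>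
     (\<lambda>x. \<sigma> x x) summable_on S \<and> (\<Sum>\<^sub>\<infinity>x\<in>S. \<sigma> x x) = 1"

definition tr_sq :: "'a set \<Rightarrow> ('a \<Rightarrow> 'a \<Rightarrow> complex) \<Rightarrow> real" where
  "tr_sq S \<sigma> = Re (\<Sum>\<^sub>\<infinity>(x,y)\<in>S \<times> S. \<sigma> x y * \<sigma> y x)"

end

theory Submission
  imports Defs
begin

text \<open>On \<open>\<ell>\<^sub>2(G \<times> G)\<close> the superoperator acts by \<open>F \<mapsto> (s\<^sup>-\<^sup>1 \<Sum>\<^sub>i F \<circ> \<phi>\<^sub>i + F) / 2\<close>, where
  \<open>\<phi>\<^sub>i\<close> multiplies both coordinates by \<open>g\<^sub>i\<close>. Split \<open>\<Sum>\<^sub>i F \<circ> \<phi>\<^sub>i\<close> according to whether the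
  reduced word in the first coordinate starts with the letter \<open>i\<close>. At any point at most one \<open>i\<close> does,
  and \<open>\<phi>\<^sub>i\<close> toggles the property; so by Cauchy-Schwarz and reindexing along the involutions \<open>\<phi>\<^sub>i\<close>
  each part has norm at most \<open>\<surd>s \<parallel>F\<parallel>\<close>, giving \<open>\<parallel>\<Omega>_bar\<parallel> \<le> (2/\<surd>s + 1)/2\<close>.
  Vectorising a matrix turns \<open>\<Omega>\<close> into \<open>\<Omega>_bar\<close> and, for Hermitian \<open>\<sigma>\<close>, \<open>tr \<sigma>\<^sup>2\<close> into the squared
  norm of the vector; for a density operator \<open>|\<sigma>\<^sub>x\<^sub>y|\<^sup>2 \<le> \<sigma>\<^sub>x\<^sub>x \<sigma>\<^sub>y\<^sub>y\<close> gives \<open>tr \<sigma>\<^sup>2 \<le> (tr \<sigma>)\<^sup>2 = 1\<close>.\<close>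

definition starts_with :: "nat \<Rightarrow> nat list \<Rightarrow> bool" where
  "starts_with i w \<longleftrightarrow> w \<noteq> [] \<and> hd w = i"

lemma gen_mult_in_FP: "i < s \<Longrightarrow> w \<in> FP s \<Longrightarrow> gen_mult i w \<in> FP s"
  unfolding FP_def gen_mult_def by (cases w) (auto simp: successively_Cons)

lemma gen_mult_gen_mult: "w \<in> FP s \<Longrightarrow> gen_mult i (gen_mult i w) = w"
  unfolding FP_def gen_mult_def by (cases w; cases "tl w") (auto simp: successively_Cons)

lemma gen_mult_neq: "gen_mult i w \<noteq> w"
proof -
  have "length (gen_mult i w) \<noteq> length w" unfolding gen_mult_def by (cases w) auto
  then show ?thesis by metis
qed

lemma starts_with_gen_mult: "w \<in> FP s \<Longrightarrow> starts_with i (gen_mult i w) \<longleftrightarrow> \<not> starts_with i w"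
  unfolding FP_def gen_mult_def starts_with_def
  by (cases w; cases "tl w") (auto simp: successively_Cons)

lemma card_starts_with_le_1: "card {i \<in> I. starts_with i w} \<le> 1"
proof -
  have "{i \<in> I. starts_with i w} \<subseteq> {hd w}" by (auto simp: starts_with_def)
  then show ?thesis using card_mono[of "{hd w}"] by fastforce
qed

definition gen_mult_pair :: "nat \<Rightarrow> nat list \<times> nat list \<Rightarrow> nat list \<times> nat list" where
  "gen_mult_pair i p = (gen_mult i (fst p), gen_mult i (snd p))"

lemma gen_mult_pair_in_FP: "i < s \<Longrightarrow> p \<in> FP s \<times> FP s \<Longrightarrow> gen_mult_pair i p \<in> FP s \<times> FP s"
  by (auto simp: gen_mult_pair_def gen_mult_in_FP)

lemma gen_mult_pair_gen_mult_pair: "p \<in> FP s \<times> FP s \<Longrightarrow> gen_mult_pair i (gen_mult_pair i p) = p"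
  by (auto simp: gen_mult_pair_def gen_mult_gen_mult)

lemma infsum_finite_support:
  fixes f :: "'a \<Rightarrow> 'b::{comm_monoid_add,t2_space}"
  assumes "finite B" "B \<subseteq> A" "\<And>x. x \<in> A - B \<Longrightarrow> f x = 0"
  shows "infsum f A = sum f B"
  by (rule infsumI, rule has_sum_finite_neutralI) (use assms in auto)

lemma has_sum_reindex_involution:
  assumes "\<And>a. a \<in> A \<Longrightarrow> f a \<in> A" "\<And>a. a \<in> A \<Longrightarrow> f (f a) = a"
  shows "((\<lambda>a. g (f a)) has_sum x) A \<longleftrightarrow> (g has_sum x) A"
  by (rule has_sum_reindex_bij_witness[where i=f and j=f]) (use assms in auto)

lemma has_sum_sum:
  fixes f :: "'i \<Rightarrow> 'a \<Rightarrow> 'b::topological_comm_monoid_add"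
  assumes "finite I" "\<And>i. i \<in> I \<Longrightarrow> (f i has_sum a i) A"
  shows "((\<lambda>x. \<Sum>i\<in>I. f i x) has_sum (\<Sum>i\<in>I. a i)) A"
  using assms by (induction I rule: finite_induct) (auto intro: has_sum_add)

lemma norm_sum_squared_le:
  fixes c :: "'i \<Rightarrow> 'a::real_normed_vector"
  shows "(norm (\<Sum>i\<in>I. c i))\<^sup>2 \<le> card I * (\<Sum>i\<in>I. (norm (c i))\<^sup>2)"
proof -
  have "(norm (\<Sum>i\<in>I. c i))\<^sup>2 \<le> (\<Sum>i\<in>I. norm (c i))\<^sup>2"
    by (intro power_mono norm_sum) simp
  also have "\<dots> \<le> (\<Sum>i\<in>I. (norm (c i))\<^sup>2) * card I"
    by (rule sum_squared_le_sum_of_squares)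
  finally show ?thesis by (simp add: mult.commute)
qed

abbreviation square_summable :: "'a set \<Rightarrow> ('a \<Rightarrow> complex) \<Rightarrow> bool" where
  "square_summable S F \<equiv> (\<lambda>p. (norm (F p))\<^sup>2) summable_on S"

lemma l2norm_nonneg: "0 \<le> l2norm S F"
  unfolding l2norm_def by (simp add: infsum_nonneg)

lemma l2norm_cong: "(\<And>p. p \<in> S \<Longrightarrow> F p = G p) \<Longrightarrow> l2norm S F = l2norm S G"
  unfolding l2norm_def by (metis (mono_tags) infsum_cong)

lemma l2norm_scale: "l2norm S (\<lambda>p. a * F p) = norm a * l2norm S F"
  unfolding l2norm_def
  by (simp add: norm_mult power_mult_distrib infsum_cmult_right' real_sqrt_mult)

lemma square_summable_scale: "square_summable S F \<Longrightarrow> square_summable S (\<lambda>p. a * F p)"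
  by (simp add: norm_mult power_mult_distrib summable_on_cmult_right)

lemma l2norm_add_le:
  assumes f: "square_summable S f" and g: "square_summable S g"
  shows "square_summable S (\<lambda>p. f p + g p) \<and> l2norm S (\<lambda>p. f p + g p) \<le> l2norm S f + l2norm S g"
proof -
  have finite_bound: "(\<Sum>p\<in>B. (norm (f p + g p))\<^sup>2) \<le> (l2norm S f + l2norm S g)\<^sup>2"
    if B: "finite B" "B \<subseteq> S" for B
  proof -
    have L2_le: "L2_set (\<lambda>p. norm (h p)) B \<le> l2norm S h" if "square_summable S h" for h
      unfolding L2_set_def l2norm_def
      by (intro real_sqrt_le_mono finite_sum_le_infsum that B) simp
    have "L2_set (\<lambda>p. norm (f p + g p)) B \<le> L2_set (\<lambda>p. norm (f p) + norm (g p)) B"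
      by (intro L2_set_mono norm_triangle_ineq) simp
    also have "\<dots> \<le> L2_set (\<lambda>p. norm (f p)) B + L2_set (\<lambda>p. norm (g p)) B"
      by (rule L2_set_triangle_ineq)
    also have "\<dots> \<le> l2norm S f + l2norm S g"
      using L2_le f g by (intro add_mono)
    finally show ?thesis
      unfolding L2_set_def by (rule sqrt_le_D)
  qed
  have sum: "square_summable S (\<lambda>p. f p + g p)"
    by (rule nonneg_bdd_above_summable_on) (auto intro!: bdd_aboveI[where M = "(l2norm S f + l2norm S g)\<^sup>2"] finite_bound)
  then have "(\<Sum>\<^sub>\<infinity>p\<in>S. (norm (f p + g p))\<^sup>2) \<le> (l2norm S f + l2norm S g)\<^sup>2"
    using finite_bound by (rule infsum_le_finite_sums)
  then have "l2norm S (\<lambda>p. f p + g p) \<le> l2norm S f + l2norm S g"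
    unfolding l2norm_def by (intro real_le_lsqrt add_nonneg_nonneg l2norm_nonneg[unfolded l2norm_def])
  with sum show ?thesis ..
qed

lemma l2norm_le_abs_of_unit:
  assumes bound: "\<And>F. square_summable S F \<Longrightarrow> l2norm S (T F) \<le> c * l2norm S F"
    and F: "F \<in> l2 S" "l2norm S F \<le> 1"
  shows "l2norm S (T F) \<le> \<bar>c\<bar>"
proof -
  have "l2norm S (T F) \<le> c * l2norm S F" using F(1) bound unfolding l2_def by blast
  also have "\<dots> \<le> \<bar>c\<bar> * 1"
    using F(2) l2norm_nonneg[of S F] by (intro mult_mono) auto
  finally show ?thesis by simp
qed

lemma opnorm_le:
  assumes "0 \<le> c" and bound: "\<And>F. square_summable S F \<Longrightarrow> l2norm S (T F) \<le> c * l2norm S F"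
  shows "opnorm S T \<le> c"
  unfolding opnorm_def
proof (rule cSup_least)
  have "(\<lambda>_. 0) \<in> l2 S" "l2norm S (\<lambda>_. 0) \<le> 1" by (simp_all add: l2_def l2norm_def)
  then show "{l2norm S (T F) |F. F \<in> l2 S \<and> l2norm S F \<le> 1} \<noteq> {}" by blast
qed (use l2norm_le_abs_of_unit[OF bound] \<open>0 \<le> c\<close> in force)

lemma l2norm_le_opnorm_unit:
  assumes bound: "\<And>F. square_summable S F \<Longrightarrow> l2norm S (T F) \<le> c * l2norm S F"
    and F: "F \<in> l2 S" "l2norm S F \<le> 1"
  shows "l2norm S (T F) \<le> opnorm S T"
  unfolding opnorm_def
proof (rule cSup_upper)
  show "l2norm S (T F) \<in> {l2norm S (T F) |F. F \<in> l2 S \<and> l2norm S F \<le> 1}"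
    using F by blast
  show "bdd_above {l2norm S (T F) |F. F \<in> l2 S \<and> l2norm S F \<le> 1}"
    using l2norm_le_abs_of_unit[OF bound] by (auto intro!: bdd_aboveI[where M = "\<bar>c\<bar>"])
qed

lemma opnorm_nonneg:
  assumes "\<And>F. square_summable S F \<Longrightarrow> l2norm S (T F) \<le> c * l2norm S F"
  shows "0 \<le> opnorm S T"
proof -
  have "(\<lambda>_. 0) \<in> l2 S" "l2norm S (\<lambda>_. 0) \<le> 1" by (simp_all add: l2_def l2norm_def)
  then show ?thesis
    using l2norm_le_opnorm_unit[OF assms] l2norm_nonneg order_trans by blast
qed

lemma l2norm_le_opnorm:
  assumes bound: "\<And>F. square_summable S F \<Longrightarrow> l2norm S (T F) \<le> c * l2norm S F"
    and homogeneous: "\<And>F G a p. (\<And>q. q \<in> S \<Longrightarrow> G q = a * F q) \<Longrightarrow> p \<in> S \<Longrightarrow> T G p = a * T F p"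
    and F: "square_summable S F"
  shows "l2norm S (T F) \<le> opnorm S T * l2norm S F"
proof -
  define r where "r = l2norm S F"
  show ?thesis
  proof (cases "r = 0")
    case True
    then show ?thesis using bound[OF F] unfolding r_def by simp
  next
    case False
    then have r: "r > 0" using l2norm_nonneg[of S F] unfolding r_def by simp
    define F' where "F' q = (if q \<in> S then complex_of_real (1 / r) * F q else 0)" for q
    have F'_S: "F' q = complex_of_real (1 / r) * F q" if "q \<in> S" for q
      using that unfolding F'_def by simp
    have "square_summable S F'"
    proof (rule summable_on_cong[THEN iffD1])
      show "square_summable S (\<lambda>q. complex_of_real (1 / r) * F q)"
        using F by (rule square_summable_scale)
    qed (simp add: F'_S)
    then have "F' \<in> l2 S" unfolding l2_def F'_def by simp
    moreover have "l2norm S F' = 1"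
    proof -
      have "l2norm S F' = l2norm S (\<lambda>q. complex_of_real (1 / r) * F q)"
        by (rule l2norm_cong) (rule F'_S)
      also have "\<dots> = 1"
        using r unfolding l2norm_scale r_def by (simp add: norm_divide)
      finally show ?thesis .
    qed
    ultimately have "l2norm S (T F') \<le> opnorm S T"
      by (intro l2norm_le_opnorm_unit[OF bound]) auto
    moreover have "l2norm S (T F') = l2norm S (T F) / r"
    proof -
      have "l2norm S (T F') = l2norm S (\<lambda>p. complex_of_real (1 / r) * T F p)"
        by (rule l2norm_cong) (rule homogeneous[OF F'_S])
      also have "\<dots> = l2norm S (T F) / r"
        using r unfolding l2norm_scale by (simp add: norm_divide)
      finally show ?thesis .
    qed
    ultimately show ?thesis using r unfolding r_def by (simp add: divide_le_eq)
  qed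
qed

section \<open>The norm of the superoperator\<close>

lemma kapply_tensor_lam:
  assumes "i < s" "p \<in> FP s \<times> FP s"
  shows "kapply (FP s \<times> FP s) (tensor_ker (lam_ker i) (conj_ker (lam_ker i))) F p = F (gen_mult_pair i p)"
proof -
  have "kapply (FP s \<times> FP s) (tensor_ker (lam_ker i) (conj_ker (lam_ker i))) F p
      = (\<Sum>q\<in>{gen_mult_pair i p}. tensor_ker (lam_ker i) (conj_ker (lam_ker i)) p q * F q)"
    unfolding kapply_def
  proof (rule infsum_finite_support)
    show "{gen_mult_pair i p} \<subseteq> FP s \<times> FP s" using assms gen_mult_pair_in_FP by blast
    fix q assume "q \<in> FP s \<times> FP s - {gen_mult_pair i p}"
    then have "p \<noteq> gen_mult_pair i q"
      using gen_mult_pair_gen_mult_pair[of q s i] by auto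
    then show "tensor_ker (lam_ker i) (conj_ker (lam_ker i)) p q * F q = 0"
      by (auto simp: tensor_ker_def lam_ker_def conj_ker_def gen_mult_pair_def prod_eq_iff)
  qed auto
  also have "\<dots> = F (gen_mult_pair i p)"
    using gen_mult_pair_gen_mult_pair[OF assms(2), of i]
    by (simp add: tensor_ker_def lam_ker_def conj_ker_def gen_mult_pair_def prod_eq_iff)
  finally show ?thesis .
qed

lemma Omega_bar_eq:
  "p \<in> FP s \<times> FP s \<Longrightarrow>
    Omega_bar s F p = (1/2) * ((1 / of_nat s) * (\<Sum>i<s. F (gen_mult_pair i p)) + F p)"
  unfolding Omega_bar_def by (subst sum.cong[OF refl kapply_tensor_lam]) auto

lemma Omega_bar_homogeneous:
  assumes G: "\<And>q. q \<in> FP s \<times> FP s \<Longrightarrow> G q = a * F q" and p: "p \<in> FP s \<times> FP s"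
  shows "Omega_bar s G p = a * Omega_bar s F p"
proof -
  have "(\<Sum>i<s. G (gen_mult_pair i p)) = a * (\<Sum>i<s. F (gen_mult_pair i p))"
    unfolding sum_distrib_left using G gen_mult_pair_in_FP[OF _ p] by (intro sum.cong) auto
  then show ?thesis
    unfolding Omega_bar_eq[OF p] G[OF p] by (simp add: ring_distribs)
qed

text \<open>Each summand is moved back to the point \<open>q\<close> it comes from by the involution
  \<open>gen_mult_pair i\<close>; \<open>k\<close> bounds how often a fixed \<open>q\<close> is hit.\<close>

lemma sum_gen_mult_pair_filter_bound:
  fixes s :: nat and P :: "nat \<Rightarrow> nat list \<times> nat list \<Rightarrow> bool"
    and F :: "nat list \<times> nat list \<Rightarrow> complex"
  defines "S \<equiv> FP s \<times> FP s"
  defines "H \<equiv> \<lambda>p. \<Sum>i\<in>{i\<in>{..<s}. P i p}. F (gen_mult_pair i p)"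
  assumes F: "square_summable S F"
    and m: "\<And>p. p \<in> S \<Longrightarrow> card {i\<in>{..<s}. P i p} \<le> m"
    and k: "\<And>q. q \<in> S \<Longrightarrow> card {i\<in>{..<s}. P i (gen_mult_pair i q)} \<le> k"
  shows "square_summable S H \<and> l2norm S H \<le> sqrt (m * k) * l2norm S F"
proof -
  define N where "N = (\<Sum>\<^sub>\<infinity>q\<in>S. (norm (F q))\<^sup>2)"
  define w where "w i p = (if P i p then (norm (F (gen_mult_pair i p)))\<^sup>2 else 0)" for i p
  define v where "v i q = (if P i (gen_mult_pair i q) then (norm (F q))\<^sup>2 else 0)" for i q
  have v: "v i summable_on S" for i
    by (rule summable_on_comparison_test[OF F]) (simp_all add: v_def)
  have "(w i has_sum infsum (v i) S) S" if "i < s" for i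
  proof -
    have inv: "gen_mult_pair i a \<in> S" "gen_mult_pair i (gen_mult_pair i a) = a" if "a \<in> S" for a
      using that \<open>i < s\<close> unfolding S_def by (simp_all add: gen_mult_pair_in_FP gen_mult_pair_gen_mult_pair)
    have "((\<lambda>p. v i (gen_mult_pair i p)) has_sum infsum (v i) S) S"
      using has_sum_reindex_involution[of S "gen_mult_pair i" "v i"] inv has_sum_infsum[OF v]
      by simp
    moreover have "v i (gen_mult_pair i p) = w i p" if "p \<in> S" for p
      using inv(2)[OF that] by (simp add: v_def w_def)
    ultimately show ?thesis
      by (rule has_sum_cong[THEN iffD1, rotated])
  qed
  then have w_sum: "((\<lambda>p. \<Sum>i<s. w i p) has_sum (\<Sum>i<s. infsum (v i) S)) S"
    by (intro has_sum_sum) auto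
  have "((\<lambda>q. \<Sum>i<s. v i q) has_sum (\<Sum>i<s. infsum (v i) S)) S"
    using v by (intro has_sum_sum) auto
  moreover have "((\<lambda>q. k * (norm (F q))\<^sup>2) has_sum k * N) S"
    using F unfolding N_def by (intro has_sum_cmult_right has_sum_infsum)
  moreover have "(\<Sum>i<s. v i q) \<le> k * (norm (F q))\<^sup>2" if "q \<in> S" for q
  proof -
    have "(\<Sum>i<s. v i q) = card {i\<in>{..<s}. P i (gen_mult_pair i q)} * (norm (F q))\<^sup>2"
      unfolding v_def by (simp add: sum.inter_filter[symmetric])
    then show ?thesis using k[OF that] by (simp add: mult_right_mono)
  qed
  ultimately have T: "(\<Sum>i<s. infsum (v i) S) \<le> k * N"
    by (rule has_sum_mono)
  have H_le: "(norm (H p))\<^sup>2 \<le> m * (\<Sum>i<s. w i p)" if "p \<in> S" for p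
  proof -
    have "(norm (H p))\<^sup>2 \<le> card {i\<in>{..<s}. P i p} * (\<Sum>i\<in>{i\<in>{..<s}. P i p}. (norm (F (gen_mult_pair i p)))\<^sup>2)"
      unfolding H_def by (rule norm_sum_squared_le)
    also have "\<dots> \<le> m * (\<Sum>i<s. w i p)"
    proof -
      have "(\<Sum>i\<in>{i\<in>{..<s}. P i p}. (norm (F (gen_mult_pair i p)))\<^sup>2) = (\<Sum>i<s. w i p)"
        unfolding w_def by (rule sum.inter_filter) simp
      moreover have "0 \<le> (\<Sum>i<s. w i p)"
        unfolding w_def by (simp add: sum_nonneg)
      ultimately show ?thesis
        using m[OF that] by (simp add: mult_right_mono)
    qed
    finally show ?thesis .
  qed
  have mw: "((\<lambda>p. m * (\<Sum>i<s. w i p)) has_sum m * (\<Sum>i<s. infsum (v i) S)) S"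
    using w_sum by (rule has_sum_cmult_right)
  have H: "square_summable S H"
    by (rule summable_on_comparison_test[OF has_sum_imp_summable[OF mw]]) (use H_le in auto)
  have "(\<Sum>\<^sub>\<infinity>p\<in>S. (norm (H p))\<^sup>2) \<le> m * (\<Sum>i<s. infsum (v i) S)"
    using has_sum_infsum[OF H] mw H_le by (rule has_sum_mono)
  also have "\<dots> \<le> m * (k * N)"
    using T by (simp add: mult_left_mono)
  finally have "l2norm S H \<le> sqrt (m * k * N)"
    unfolding l2norm_def by (simp add: mult.assoc)
  then show ?thesis
    using H by (simp add: real_sqrt_mult l2norm_def N_def)
qed

text \<open>Split according to whether the first coordinate starts with \<open>i\<close>: at most one \<open>i\<close> does, and
  applying \<open>gen_mult_pair i\<close> toggles the property, so both parts are bounded by \<open>\<surd>s\<close>.\<close>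

lemma sum_gen_mult_pair_bound:
  assumes F: "square_summable (FP s \<times> FP s) F"
  shows "square_summable (FP s \<times> FP s) (\<lambda>p. \<Sum>i<s. F (gen_mult_pair i p)) \<and>
    l2norm (FP s \<times> FP s) (\<lambda>p. \<Sum>i<s. F (gen_mult_pair i p)) \<le> 2 * sqrt s * l2norm (FP s \<times> FP s) F"
proof -
  let ?S = "FP s \<times> FP s"
  define H where "H b p = (\<Sum>i\<in>{i\<in>{..<s}. starts_with i (fst p) = b}. F (gen_mult_pair i p))" for b p
  have card_le_s: "card {i\<in>{..<s}. Q i} \<le> s" for Q
    using card_mono[of "{..<s}" "{i\<in>{..<s}. Q i}"] by auto
  have card_le_1: "card {i\<in>{..<s}. starts_with i (fst q) = True} \<le> 1" for q
    using card_starts_with_le_1[of "{..<s}" "fst q"] by simp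
  have flip: "{i\<in>{..<s}. starts_with i (fst (gen_mult_pair i q)) = b} = {i\<in>{..<s}. starts_with i (fst q) = (\<not> b)}"
    if "q \<in> ?S" for q b
    using starts_with_gen_mult[of "fst q" s] that by (auto simp: gen_mult_pair_def)
  have T: "square_summable ?S (H True) \<and> l2norm ?S (H True) \<le> sqrt (1 * s) * l2norm ?S F"
    unfolding H_def
    by (rule sum_gen_mult_pair_filter_bound[OF F]) (simp_all only: card_le_1 card_le_s flip)
  have F': "square_summable ?S (H False) \<and> l2norm ?S (H False) \<le> sqrt (s * 1) * l2norm ?S F"
    unfolding H_def
    by (rule sum_gen_mult_pair_filter_bound[OF F]) (simp_all only: card_le_1 card_le_s flip not_False_eq_True)
  have split: "(\<Sum>i<s. F (gen_mult_pair i p)) = H True p + H False p" for p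
    unfolding H_def sum.inter_filter[OF finite_lessThan] sum.distrib[symmetric]
    by (rule sum.cong) simp_all
  have "l2norm ?S (H True) + l2norm ?S (H False) \<le> 2 * sqrt s * l2norm ?S F"
    using T F' by simp
  then show ?thesis
    unfolding split using l2norm_add_le[OF T[THEN conjunct1] F'[THEN conjunct1]] by simp
qed

theorem Omega_bar_bound:
  assumes "1 \<le> s" and F: "square_summable (FP s \<times> FP s) F"
  shows "square_summable (FP s \<times> FP s) (Omega_bar s F) \<and>
    l2norm (FP s \<times> FP s) (Omega_bar s F) \<le> (1/2 + 1 / sqrt s) * l2norm (FP s \<times> FP s) F"
proof -
  let ?S = "FP s \<times> FP s"
  define H where "H p = (\<Sum>i<s. F (gen_mult_pair i p))" for p
  define G where "G p = complex_of_real (1 / (2 * s)) * H p + complex_of_real (1/2) * F p" for p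
  have eq: "Omega_bar s F p = G p" if "p \<in> ?S" for p
    using Omega_bar_eq[OF that] by (simp add: G_def H_def field_simps)
  have H: "square_summable ?S H" "l2norm ?S H \<le> 2 * sqrt s * l2norm ?S F"
    using sum_gen_mult_pair_bound[OF F] unfolding H_def by auto
  have G: "square_summable ?S G" "l2norm ?S G \<le> 1 / (2 * s) * l2norm ?S H + 1/2 * l2norm ?S F"
    using l2norm_add_le[OF square_summable_scale[OF H(1), of "complex_of_real (1 / (2 * s))"]
        square_summable_scale[OF F, of "complex_of_real (1/2)"]]
    unfolding G_def[abs_def] l2norm_scale norm_of_real by simp_all
  have "1 / (2 * s) * l2norm ?S H \<le> 1 / (2 * s) * (2 * sqrt s * l2norm ?S F)"
    using H(2) by (intro mult_left_mono) simp_all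
  also have "\<dots> = 1 / sqrt s * l2norm ?S F"
  proof -
    have "1 / (2 * a\<^sup>2) * (2 * a * N) = 1 / a * N" if "0 < a" for a N :: real
      using that by (simp add: power2_eq_square)
    from this[of "sqrt s"] show ?thesis using \<open>1 \<le> s\<close> by simp
  qed
  finally have "l2norm ?S G \<le> (1/2 + 1 / sqrt s) * l2norm ?S F"
    using G(2) unfolding distrib_right by linarith
  moreover have "square_summable ?S (Omega_bar s F)"
    using G(1) by (rule summable_on_cong[THEN iffD1, rotated]) (simp add: eq)
  ultimately show ?thesis
    using l2norm_cong[of ?S "Omega_bar s F" G] eq by simp
qed

lemma kmult_P_left:
  assumes "i < s" "x \<in> FP s"
  shows "kmult (FP s) (P_ker i sg) \<tau> x u = (\<tau> x u + sg * \<tau> (gen_mult i x) u) / 2"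
proof -
  have x: "x \<noteq> gen_mult i x" "gen_mult i (gen_mult i x) = x"
    using gen_mult_neq[of i x] gen_mult_gen_mult[OF assms(2)] by auto
  have "kmult (FP s) (P_ker i sg) \<tau> x u = (\<Sum>v\<in>{x, gen_mult i x}. P_ker i sg x v * \<tau> v u)"
    unfolding kmult_def
  proof (rule infsum_finite_support)
    show "{x, gen_mult i x} \<subseteq> FP s" using assms gen_mult_in_FP by auto
    fix v assume v: "v \<in> FP s - {x, gen_mult i x}"
    then have "x \<noteq> gen_mult i v" using gen_mult_gen_mult[of v s i] by auto
    with v show "P_ker i sg x v * \<tau> v u = 0" by (auto simp: P_ker_def id_ker_def lam_ker_def)
  qed simp
  also have "\<dots> = (\<tau> x u + sg * \<tau> (gen_mult i x) u) / 2"
    using x by (simp add: P_ker_def id_ker_def lam_ker_def field_simps)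
  finally show ?thesis .
qed

lemma kmult_P_right:
  assumes "i < s" "y \<in> FP s"
  shows "kmult (FP s) M (P_ker i sg) x y = (M x y + sg * M x (gen_mult i y)) / 2"
proof -
  have y: "y \<noteq> gen_mult i y" using gen_mult_neq[of i y] by auto
  have "kmult (FP s) M (P_ker i sg) x y = (\<Sum>v\<in>{y, gen_mult i y}. M x v * P_ker i sg v y)"
    unfolding kmult_def
  proof (rule infsum_finite_support)
    show "{y, gen_mult i y} \<subseteq> FP s" using assms gen_mult_in_FP by auto
  qed (auto simp: P_ker_def id_ker_def lam_ker_def)
  also have "\<dots> = (M x y + sg * M x (gen_mult i y)) / 2"
    using y by (simp add: P_ker_def id_ker_def lam_ker_def field_simps)
  finally show ?thesis .
qed

lemma Omega_vectorized:
  assumes "1 \<le> s" and xy: "x \<in> FP s" "y \<in> FP s"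
  shows "Omega s \<tau> x y = Omega_bar s (case_prod \<tau>) (x, y)"
proof -
  have summand: "kmult (FP s) (kmult (FP s) (P_ker i 1) \<tau>) (P_ker i 1) x y
      + kmult (FP s) (kmult (FP s) (P_ker i (-1)) \<tau>) (P_ker i (-1)) x y
    = (\<tau> x y + \<tau> (gen_mult i x) (gen_mult i y)) / 2" if "i < s" for i
    using that xy by (simp add: kmult_P_right kmult_P_left field_simps)
  have "Omega s \<tau> x y = (1 / of_nat s) * (\<Sum>i<s. (\<tau> x y + \<tau> (gen_mult i x) (gen_mult i y)) / 2)"
    unfolding Omega_def by (simp add: summand)
  also have "\<dots> = (1 / of_nat s) * ((of_nat s * \<tau> x y + (\<Sum>i<s. \<tau> (gen_mult i x) (gen_mult i y))) / 2)"
    by (simp add: sum_divide_distrib[symmetric] sum.distrib)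
  also have "\<dots> = (1/2) * ((1 / of_nat s) * (\<Sum>i<s. \<tau> (gen_mult i x) (gen_mult i y)) + \<tau> x y)"
    using \<open>1 \<le> s\<close> by (simp add: field_simps)
  also have "\<dots> = Omega_bar s (case_prod \<tau>) (x, y)"
    using xy by (simp add: Omega_bar_eq gen_mult_pair_def)
  finally show ?thesis .
qed

definition hermitian_on :: "'a set \<Rightarrow> ('a \<Rightarrow> 'a \<Rightarrow> complex) \<Rightarrow> bool" where
  "hermitian_on G \<tau> \<longleftrightarrow> (\<forall>x\<in>G. \<forall>y\<in>G. \<tau> y x = cnj (\<tau> x y))"

lemma hermitian_on_Omega:
  assumes "1 \<le> s" and \<tau>: "hermitian_on (FP s) \<tau>"
  shows "hermitian_on (FP s) (Omega s \<tau>)"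
  unfolding hermitian_on_def
proof (intro ballI)
  fix x y assume xy: "x \<in> FP s" "y \<in> FP s"
  have "\<tau> (gen_mult i y) (gen_mult i x) = cnj (\<tau> (gen_mult i x) (gen_mult i y))" if "i < s" for i
    using \<tau> gen_mult_in_FP[OF that] xy unfolding hermitian_on_def by blast
  moreover have "\<tau> y x = cnj (\<tau> x y)"
    using \<tau> xy unfolding hermitian_on_def by blast
  ultimately show "Omega s \<tau> y x = cnj (Omega s \<tau> x y)"
    using xy by (simp add: Omega_vectorized[OF \<open>1 \<le> s\<close>] Omega_bar_eq gen_mult_pair_def cnj_sum)
qed

lemma mu_nonneg: "1 \<le> s \<Longrightarrow> 0 \<le> mu s"
  unfolding mu_def
  by (rule opnorm_nonneg[where c = "1/2 + 1 / sqrt s"]) (use Omega_bar_bound in blast)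

lemma l2norm_Omega_bar_le_mu:
  assumes "1 \<le> s" and F: "square_summable (FP s \<times> FP s) F"
  shows "l2norm (FP s \<times> FP s) (Omega_bar s F) \<le> mu s * l2norm (FP s \<times> FP s) F"
  unfolding mu_def
proof (rule l2norm_le_opnorm[where c = "1/2 + 1 / sqrt s", OF _ Omega_bar_homogeneous F])
  show "l2norm (FP s \<times> FP s) (Omega_bar s G) \<le> (1/2 + 1 / sqrt s) * l2norm (FP s \<times> FP s) G"
    if "square_summable (FP s \<times> FP s) G" for G
    using Omega_bar_bound[OF \<open>1 \<le> s\<close> that] by blast
qed

lemma l2norm_Omega_iter_le:
  assumes "1 \<le> s" and \<tau>: "square_summable (FP s \<times> FP s) (case_prod \<tau>)"
  shows "square_summable (FP s \<times> FP s) (case_prod ((Omega s ^^ N) \<tau>)) \<and>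
    l2norm (FP s \<times> FP s) (case_prod ((Omega s ^^ N) \<tau>)) \<le> mu s ^ N * l2norm (FP s \<times> FP s) (case_prod \<tau>)"
proof (induction N)
  case 0
  then show ?case using \<tau> by simp
next
  case (Suc N)
  let ?S = "FP s \<times> FP s" and ?\<tau> = "(Omega s ^^ N) \<tau>"
  have vec: "case_prod (Omega s ?\<tau>) p = Omega_bar s (case_prod ?\<tau>) p" if "p \<in> ?S" for p
    using that Omega_vectorized[OF \<open>1 \<le> s\<close>] by auto
  have "square_summable ?S (Omega_bar s (case_prod ?\<tau>))"
    using Omega_bar_bound[OF \<open>1 \<le> s\<close>] Suc.IH by blast
  then have "square_summable ?S (case_prod (Omega s ?\<tau>))"
    by (rule summable_on_cong[THEN iffD1, rotated]) (simp add: vec)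
  moreover have "l2norm ?S (case_prod (Omega s ?\<tau>)) = l2norm ?S (Omega_bar s (case_prod ?\<tau>))"
    by (rule l2norm_cong) (rule vec)
  moreover have "l2norm ?S (Omega_bar s (case_prod ?\<tau>)) \<le> mu s * l2norm ?S (case_prod ?\<tau>)"
    using l2norm_Omega_bar_le_mu[OF \<open>1 \<le> s\<close>] Suc.IH by blast
  moreover have "mu s * l2norm ?S (case_prod ?\<tau>) \<le> mu s * (mu s ^ N * l2norm ?S (case_prod \<tau>))"
    using Suc.IH mu_nonneg[OF \<open>1 \<le> s\<close>] by (intro mult_left_mono) auto
  ultimately show ?case by simp
qed

lemma tr_sq_eq_l2norm:
  assumes h: "hermitian_on G \<tau>" and l: "square_summable (G \<times> G) (case_prod \<tau>)"
  shows "tr_sq G \<tau> = (l2norm (G \<times> G) (case_prod \<tau>))\<^sup>2"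
proof -
  have "(\<Sum>\<^sub>\<infinity>(x, y)\<in>G \<times> G. \<tau> x y * \<tau> y x) = (\<Sum>\<^sub>\<infinity>p\<in>G \<times> G. complex_of_real ((norm (case_prod \<tau> p))\<^sup>2))"
  proof (rule infsum_cong)
    fix p assume p: "p \<in> G \<times> G"
    obtain x y where [simp]: "p = (x, y)" by fastforce
    have "x \<in> G" "y \<in> G" using p by auto
    then have "\<tau> y x = cnj (\<tau> x y)"
      using h unfolding hermitian_on_def by blast
    then show "(case p of (x, y) \<Rightarrow> \<tau> x y * \<tau> y x) = complex_of_real ((norm (case_prod \<tau> p))\<^sup>2)"
      by (simp only: complex_norm_square \<open>p = (x, y)\<close> prod.case)
  qed
  also have "\<dots> = complex_of_real (\<Sum>\<^sub>\<infinity>p\<in>G \<times> G. (norm (case_prod \<tau> p))\<^sup>2)"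
    by (rule infsumI[OF has_sum_of_real[OF has_sum_infsum[OF l]]])
  finally show ?thesis
    unfolding tr_sq_def l2norm_def by (simp add: infsum_nonneg)
qed

theorem tr_sq_Omega_iter_le:
  assumes "1 \<le> s" and h: "hermitian_on (FP s) \<tau>" and l: "square_summable (FP s \<times> FP s) (case_prod \<tau>)"
  shows "tr_sq (FP s) ((Omega s ^^ N) \<tau>) \<le> mu s ^ (2 * N) * tr_sq (FP s) \<tau>"
proof -
  let ?S = "FP s \<times> FP s"
  have "hermitian_on (FP s) ((Omega s ^^ N) \<tau>)"
    by (induction N) (simp_all add: h hermitian_on_Omega[OF \<open>1 \<le> s\<close>])
  then have "tr_sq (FP s) ((Omega s ^^ N) \<tau>) = (l2norm ?S (case_prod ((Omega s ^^ N) \<tau>)))\<^sup>2"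
    using l2norm_Omega_iter_le[OF \<open>1 \<le> s\<close> l] by (blast intro: tr_sq_eq_l2norm)
  also have "\<dots> \<le> (mu s ^ N * l2norm ?S (case_prod \<tau>))\<^sup>2"
    using l2norm_Omega_iter_le[OF \<open>1 \<le> s\<close> l] by (intro power_mono) (auto simp: l2norm_nonneg)
  also have "\<dots> = mu s ^ (2 * N) * tr_sq (FP s) \<tau>"
    by (simp add: tr_sq_eq_l2norm[OF h l] power_mult_distrib power_mult[symmetric] mult.commute)
  finally show ?thesis .
qed

section \<open>Density operators\<close>

lemma quadratic_nonneg_imp_le:
  fixes A C n :: real
  assumes q: "\<And>t. 0 \<le> A * t\<^sup>2 * n - 2 * t * n + C" and "0 \<le> A" "0 \<le> C" "0 \<le> n"
  shows "n \<le> A * C"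
proof (cases "n = 0 \<or> A = 0")
  case True
  moreover have "n = 0" if "A = 0"
    using q[of "(C + 1) / (2 * n)"] that \<open>0 \<le> n\<close> by (cases "n = 0") (simp_all add: field_simps)
  ultimately show ?thesis using assms by auto
next
  case False
  then have "0 < A" using \<open>0 \<le> A\<close> by simp
  then have "0 \<le> C - n / A"
    using q[of "1 / A"] by (simp add: power2_eq_square field_simps)
  then show ?thesis using \<open>0 < A\<close> by (simp add: field_simps)
qed

lemma density_op_hermitian: "density_op G \<sigma> \<Longrightarrow> \<sigma> y x = cnj (\<sigma> x y)"
  unfolding density_op_def by blast

lemma density_op_psd:
  "density_op G \<sigma> \<Longrightarrow> finite A \<Longrightarrow> A \<subseteq> G \<Longrightarrow> 0 \<le> Re (\<Sum>x\<in>A. \<Sum>y\<in>A. cnj (f x) * \<sigma> x y * f y)"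
  unfolding density_op_def by blast

lemma density_op_diag:
  assumes d: "density_op G \<sigma>" and x: "x \<in> G"
  shows "\<sigma> x x = complex_of_real (Re (\<sigma> x x))" "0 \<le> Re (\<sigma> x x)"
proof -
  have "Im (\<sigma> x x) = 0"
    using density_op_hermitian[OF d, of x x] by (simp add: complex_eq_iff)
  then show "\<sigma> x x = complex_of_real (Re (\<sigma> x x))" by (simp add: complex_eq_iff)
  show "0 \<le> Re (\<sigma> x x)"
    using density_op_psd[OF d, of "{x}" "\<lambda>_. 1"] x by simp
qed

text \<open>Positivity on the span of \<open>|x\<rangle>\<close> and \<open>|y\<rangle>\<close>, tested with the vector \<open>-t\<sigma>\<^sub>x\<^sub>y|x\<rangle> + |y\<rangle>\<close>.\<close>

lemma density_op_entry_bound: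
  assumes d: "density_op G \<sigma>" and x: "x \<in> G" and y: "y \<in> G"
  shows "(norm (\<sigma> x y))\<^sup>2 \<le> Re (\<sigma> x x) * Re (\<sigma> y y)"
proof (cases "x = y")
  case True
  then show ?thesis using density_op_diag[OF d x] by (metis norm_of_real power2_eq_square abs_mult_self_eq order_refl)
next
  case False
  define ax ay b where "ax = Re (\<sigma> x x)" and "ay = Re (\<sigma> y y)" and "b = \<sigma> x y"
  have sx: "\<sigma> x x = complex_of_real ax" and sy: "\<sigma> y y = complex_of_real ay"
    using density_op_diag[OF d] x y unfolding ax_def ay_def by blast+
  have syx: "\<sigma> y x = cnj b" unfolding b_def by (rule density_op_hermitian[OF d])
  have bb: "cnj b * b = complex_of_real ((norm b)\<^sup>2)"
    using complex_norm_square[of b] by (simp add: mult.commute)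
  show ?thesis unfolding ax_def[symmetric] ay_def[symmetric] b_def[symmetric]
  proof (rule quadratic_nonneg_imp_le)
    fix t :: real
    define f where "f z = (if z = x then - (complex_of_real t * b) else 1)" for z
    have "(\<Sum>u\<in>{x, y}. \<Sum>v\<in>{x, y}. cnj (f u) * \<sigma> u v * f v)
        = complex_of_real t * complex_of_real t * complex_of_real ax * (cnj b * b)
          - 2 * complex_of_real t * (cnj b * b) + complex_of_real ay"
      using False unfolding f_def by (simp add: sx sy syx b_def[symmetric] algebra_simps)
    also have "\<dots> = complex_of_real (ax * t\<^sup>2 * (norm b)\<^sup>2 - 2 * t * (norm b)\<^sup>2 + ay)"
      unfolding bb by (simp add: power2_eq_square algebra_simps)
    finally show "0 \<le> ax * t\<^sup>2 * (norm b)\<^sup>2 - 2 * t * (norm b)\<^sup>2 + ay"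
      using density_op_psd[OF d, of "{x, y}" f] x y by simp
  qed (use density_op_diag[OF d] x y in \<open>auto simp: ax_def ay_def\<close>)
qed

theorem density_op_l2norm_le_1:
  assumes d: "density_op G \<sigma>"
  shows "square_summable (G \<times> G) (case_prod \<sigma>) \<and> l2norm (G \<times> G) (case_prod \<sigma>) \<le> 1"
proof -
  define a where "a x = Re (\<sigma> x x)" for x
  have diag: "(\<lambda>x. \<sigma> x x) summable_on G" "(\<Sum>\<^sub>\<infinity>x\<in>G. \<sigma> x x) = 1"
    using d unfolding density_op_def by blast+
  have a: "a summable_on G" "infsum a G = 1"
    using summable_on_Re[OF diag(1)] infsum_Re[OF diag(1)] diag(2) unfolding a_def by simp_all
  have a_nonneg: "x \<in> G \<Longrightarrow> 0 \<le> a x" for x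
    using density_op_diag[OF d] unfolding a_def by blast
  have sum_a: "sum a B \<le> 1" if "finite B" "B \<subseteq> G" for B
    using finite_sum_le_infsum[OF a(1) that] a_nonneg a(2) by auto
  have finite_bound: "(\<Sum>p\<in>B. (norm (case_prod \<sigma> p))\<^sup>2) \<le> 1" if B: "finite B" "B \<subseteq> G \<times> G" for B
  proof -
    have "(\<Sum>p\<in>B. (norm (case_prod \<sigma> p))\<^sup>2) \<le> (\<Sum>p\<in>fst ` B \<times> snd ` B. a (fst p) * a (snd p))"
    proof (rule sum_le_included[where i = id])
      show "\<forall>p\<in>fst ` B \<times> snd ` B. 0 \<le> a (fst p) * a (snd p)"
        using B by (auto intro!: mult_nonneg_nonneg a_nonneg)
      show "\<forall>p\<in>B. \<exists>q\<in>fst ` B \<times> snd ` B. id q = p \<and> (norm (case_prod \<sigma> p))\<^sup>2 \<le> a (fst q) * a (snd q)"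
        using B density_op_entry_bound[OF d] unfolding a_def by (force intro: rev_image_eqI)
    qed (use B in auto)
    also have "\<dots> = sum a (fst ` B) * sum a (snd ` B)"
      by (simp add: sum_product sum.cartesian_product case_prod_beta)
    also have "\<dots> \<le> 1 * 1"
      using B by (intro mult_mono sum_a sum_nonneg a_nonneg) auto
    finally show ?thesis by simp
  qed
  have sum: "square_summable (G \<times> G) (case_prod \<sigma>)"
    by (rule nonneg_bdd_above_summable_on) (auto intro!: bdd_aboveI[where M = 1] finite_bound)
  then have "(\<Sum>\<^sub>\<infinity>p\<in>G \<times> G. (norm (case_prod \<sigma> p))\<^sup>2) \<le> 1"
    using finite_bound by (rule infsum_le_finite_sums)
  with sum show ?thesis unfolding l2norm_def by simp
qed

lemma hermitian_on_density_op:
  assumes "density_op G \<sigma>"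
  shows "hermitian_on G \<sigma>"
  unfolding hermitian_on_def using density_op_hermitian[OF assms] by blast

lemma tr_sq_density_op_le_1:
  assumes "density_op G \<sigma>"
  shows "tr_sq G \<sigma> \<le> 1"
proof -
  have "square_summable (G \<times> G) (case_prod \<sigma>)" "l2norm (G \<times> G) (case_prod \<sigma>) \<le> 1"
    using density_op_l2norm_le_1[OF assms] by auto
  then show ?thesis
    using tr_sq_eq_l2norm[OF hermitian_on_density_op[OF assms]] l2norm_nonneg
    by (metis power_le_one)
qed

theorem mainTheorem5:
  fixes s :: nat
  assumes "s \<ge> 1"
  shows "opnorm (FP s \<times> FP s) (Omega_bar s) \<le> 1/2 + 1 / sqrt (real s) \<and>
    (s \<ge> 5 \<longrightarrow> mu s < 1 \<and>
       (\<forall>\<sigma> (N::nat). density_op (FP s) \<sigma> \<longrightarrow>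
          tr_sq (FP s) ((Omega s ^^ N) \<sigma>) \<le> mu s ^ (2*N) * tr_sq (FP s) \<sigma> \<and>
          mu s ^ (2*N) * tr_sq (FP s) \<sigma> \<le> mu s ^ (2*N)))"
proof -
  have opnorm_bound: "opnorm (FP s \<times> FP s) (Omega_bar s) \<le> 1/2 + 1 / sqrt s"
    using Omega_bar_bound[OF assms] by (intro opnorm_le) auto
  moreover have "mu s < 1" if "s \<ge> 5"
  proof -
    have "2 < sqrt s"
      using that real_sqrt_less_iff[of 4 "real s"] by (simp add: real_sqrt_four)
    then have "1 / sqrt s < 1/2" by (simp add: divide_less_eq)
    then show ?thesis using opnorm_bound unfolding mu_def by linarith
  qed
  moreover have "tr_sq (FP s) ((Omega s ^^ N) \<sigma>) \<le> mu s ^ (2*N) * tr_sq (FP s) \<sigma> \<and>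
      mu s ^ (2*N) * tr_sq (FP s) \<sigma> \<le> mu s ^ (2*N)" if \<sigma>: "density_op (FP s) \<sigma>" for \<sigma> N
    using tr_sq_Omega_iter_le[OF assms hermitian_on_density_op[OF \<sigma>]
        density_op_l2norm_le_1[OF \<sigma>, THEN conjunct1]]
      tr_sq_density_op_le_1[OF \<sigma>] mu_nonneg[OF assms]
    by (simp add: mult_left_le)
  ultimately show ?thesis by blast
qed

end
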